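(* Let $S^{(1)},\dots,S^{(n)}$ be arbitrary labeled samples, each of size $m$, $S^{(i)}=\{(x^{(i)}_j,y^{(i)}_j)\}_{j\in[m]}\subseteq\{\pm1\}^d\times\{\pm1\}$, let $\mathcal{H}$ be a class of functions $\{\pm1\}^d\to\{\pm1\}$, and let $t\in\mathbb{N}$. Let $h^{(1)},\dots,h^{(n)}$ be the output of $\textsc{Boost}(S^{(1)},\dots,S^{(n)},\mathcal{H},t)$. For each iteration $s\in[t]$, let $\Gamma_s\in[0,1]$ be the value satisfying $$\sum_{i\in[n]}W^{(i)}\Big(\sum_{j\in[m]}\frac{w^{(i)}_j}{W^{(i)}}\,y^{(i)}_j h^\star(x^{(i)}_j)\Big)^2=\Gamma_s\sum_{i\in[n]}W^{(i)},$$ where $w^{(i)}_j,W^{(i)},h^\star$ are the quantities of iteration $s$. Then $$\frac{1}{nm}\sum_{i\in[n]}\sum_{j\in[m]}\mathbf{1}\big[\mathrm{sign}(h^{(i)}(x^{(i)}_j))\neq y^{(i)}_j\big]\ \le\ \prod_{s\in[t]}\Big(1-\frac{\Gamma_s}{2}\Big).$$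
   Context: Algorithm $\textsc{Boost}(S^{(1)},\dots,S^{(n)},\mathcal{H},t)$: initialize real-valued functions $h^{(1)},\dots,h^{(n)}$ to the constant $0$. Repeat $t$ times: (1) for each $i\in[n],j\in[m]$ set $w^{(i)}_j=\exp(-y^{(i)}_j h^{(i)}(x^{(i)}_j))$ and $W^{(i)}=\sum_{j\in[m]}w^{(i)}_j$; (2) choose $h^\star\in\arg\max_{h\in\mathcal{H}}\sum_{i\in[n]}W^{(i)}\big(\sum_{j\in[m]}\frac{w^{(i)}_j}{W^{(i)}}y^{(i)}_jh(x^{(i)}_j)\big)^2$; (3) for each $i\in[n]$, update $h^{(i)}\leftarrow h^{(i)}+\alpha^{(i)}h^\star$ with $\alpha^{(i)}=\frac12\ln\Big(\frac{\sum_j w^{(i)}_j\mathbf{1}[y^{(i)}_j=h^\star(x^{(i)}_j)]}{\sum_j w^{(i)}_j\mathbf{1}[y^{(i)}_j\neq h^\star(x^{(i)}_j)]}\Big)$. Output $h^{(1)},\dots,h^{(n)}$ (used as classifiers via $\mathrm{sign}(h^{(i)})$). *)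

theory Defs
  imports Complex_Main
begin

text \<open>Samples: for i < n, j < m the point x i j (a list of length d with entries +-1)
  and label y i j (in {-1,1}). F i is the current real-valued function h^(i).\<close>

definition cube :: "nat \<Rightarrow> int list set" where
  "cube d = {v. length v = d \<and> set v \<subseteq> {-1, 1}}"

definition bw :: "(nat \<Rightarrow> nat \<Rightarrow> int list) \<Rightarrow> (nat \<Rightarrow> nat \<Rightarrow> int)
    \<Rightarrow> (nat \<Rightarrow> int list \<Rightarrow> real) \<Rightarrow> nat \<Rightarrow> nat \<Rightarrow> real" where
  "bw x y F i j = exp (- real_of_int (y i j) * F i (x i j))"

definition bW :: "(nat \<Rightarrow> nat \<Rightarrow> int list) \<Rightarrow> (nat \<Rightarrow> nat \<Rightarrow> int) \<Rightarrow> nat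
    \<Rightarrow> (nat \<Rightarrow> int list \<Rightarrow> real) \<Rightarrow> nat \<Rightarrow> real" where
  "bW x y m F i = (\<Sum>j<m. bw x y F i j)"

definition correct_mass :: "(nat \<Rightarrow> nat \<Rightarrow> int list) \<Rightarrow> (nat \<Rightarrow> nat \<Rightarrow> int) \<Rightarrow> nat
    \<Rightarrow> (nat \<Rightarrow> int list \<Rightarrow> real) \<Rightarrow> (int list \<Rightarrow> real) \<Rightarrow> nat \<Rightarrow> real" where
  "correct_mass x y m F h i =
     (\<Sum>j<m. if real_of_int (y i j) = h (x i j) then bw x y F i j else 0)"

definition wrong_mass :: "(nat \<Rightarrow> nat \<Rightarrow> int list) \<Rightarrow> (nat \<Rightarrow> nat \<Rightarrow> int) \<Rightarrow> nat
    \<Rightarrow> (nat \<Rightarrow> int list \<Rightarrow> real) \<Rightarrow> (int list \<Rightarrow> real) \<Rightarrow> nat \<Rightarrow> real" where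
  "wrong_mass x y m F h i =
     (\<Sum>j<m. if real_of_int (y i j) \<noteq> h (x i j) then bw x y F i j else 0)"

definition balpha :: "(nat \<Rightarrow> nat \<Rightarrow> int list) \<Rightarrow> (nat \<Rightarrow> nat \<Rightarrow> int) \<Rightarrow> nat
    \<Rightarrow> (nat \<Rightarrow> int list \<Rightarrow> real) \<Rightarrow> (int list \<Rightarrow> real) \<Rightarrow> nat \<Rightarrow> real" where
  "balpha x y m F h i = ln (correct_mass x y m F h i / wrong_mass x y m F h i) / 2"

text \<open>The objective maximised in step (2).\<close>
definition objective :: "(nat \<Rightarrow> nat \<Rightarrow> int list) \<Rightarrow> (nat \<Rightarrow> nat \<Rightarrow> int) \<Rightarrow> nat \<Rightarrow> nat
    \<Rightarrow> (nat \<Rightarrow> int list \<Rightarrow> real) \<Rightarrow> (int list \<Rightarrow> real) \<Rightarrow> real" where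
  "objective x y n m F h =
     (\<Sum>i<n. bW x y m F i *
        (\<Sum>j<m. bw x y F i j / bW x y m F i * real_of_int (y i j) * h (x i j))\<^sup>2)"

text \<open>boostF x y m hs s = the functions h^(1..n) after s rounds, when the hypothesis
  chosen in round r (r < s) is hs r.\<close>
fun boostF :: "(nat \<Rightarrow> nat \<Rightarrow> int list) \<Rightarrow> (nat \<Rightarrow> nat \<Rightarrow> int) \<Rightarrow> nat
    \<Rightarrow> (nat \<Rightarrow> int list \<Rightarrow> real) \<Rightarrow> nat \<Rightarrow> nat \<Rightarrow> int list \<Rightarrow> real" where
  "boostF x y m hs 0 = (\<lambda>i v. 0)"
| "boostF x y m hs (Suc s) =
     (let F = boostF x y m hs s
      in (\<lambda>i v. F i v + balpha x y m F (hs s) i * hs s v))"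

definition Gamma :: "(nat \<Rightarrow> nat \<Rightarrow> int list) \<Rightarrow> (nat \<Rightarrow> nat \<Rightarrow> int) \<Rightarrow> nat \<Rightarrow> nat
    \<Rightarrow> (nat \<Rightarrow> int list \<Rightarrow> real) \<Rightarrow> nat \<Rightarrow> real" where
  "Gamma x y n m hs s =
     objective x y n m (boostF x y m hs s) (hs s) / (\<Sum>i<n. bW x y m (boostF x y m hs s) i)"

end

theory Submission
  imports Defs
begin

text \<open>The total weight \<open>\<Sum>\<^sub>i W\<^sup>(\<^sup>i\<^sup>)\<close> is a potential. It starts at \<open>nm\<close>, it bounds the number of
  training mistakes because \<open>\<one>[sign z \<noteq> y] \<le> exp (-y z)\<close>, and in round \<open>s\<close> the choice of
  \<open>\<alpha>\<^sup>(\<^sup>i\<^sup>)\<close> turns the weight \<open>C + W\<close> of sample \<open>i\<close> (correct plus wrong mass) into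
  \<open>2\<surd>(C W) = (C + W) \<surd>(1 - \<gamma>) \<le> (C + W)(1 - \<gamma>/2)\<close>, where \<open>\<gamma> = ((C - W)/(C + W))\<^sup>2\<close>
  is the squared edge of \<open>h\<^sup>\<star>\<close> on that sample. Summing over samples, \<open>\<Sum> (C + W) \<gamma>\<close> is
  the objective of step (2), i.e. \<open>\<Gamma>\<^sub>s\<close> times the potential, which therefore shrinks by the
  factor \<open>1 - \<Gamma>\<^sub>s/2\<close>.\<close>

lemma sqrt_one_minus_le:
  fixes g :: real
  assumes "0 \<le> g" "g \<le> 1"
  shows "sqrt (1 - g) \<le> 1 - g / 2"
  using assms by (intro real_le_lsqrt) (auto simp: power2_eq_square algebra_simps)

lemma exp_half_ln_ratio_balance:
  fixes c w :: real
  assumes "c > 0" "w > 0"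
  shows "c * exp (- (ln (c / w) / 2)) + w * exp (ln (c / w) / 2) = 2 * sqrt (c * w)"
proof -
  have "exp (ln (c / w) / 2) = sqrt (c / w)"
    using assms by (simp add: powr_half_sqrt[symmetric] powr_def)
  hence e: "exp (ln (c / w) / 2) = sqrt c / sqrt w"
    by (simp add: real_sqrt_divide)
  have "c * exp (- (ln (c / w) / 2)) = sqrt c * sqrt w"
    using assms by (simp add: exp_minus e field_simps)
  moreover have "w * exp (ln (c / w) / 2) = sqrt c * sqrt w"
    using assms by (simp add: e field_simps)
  ultimately show ?thesis
    by (simp add: real_sqrt_mult)
qed

lemma two_sqrt_mult_le:
  fixes c w :: real
  assumes "c > 0" "w > 0"
  shows "2 * sqrt (c * w) \<le> (c + w) - (c + w) * ((c - w) / (c + w))\<^sup>2 / 2"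
proof -
  define g where "g = ((c - w) / (c + w))\<^sup>2"
  have S: "c + w > 0" using assms by simp
  have "(c - w)\<^sup>2 \<le> (c + w)\<^sup>2"
    using assms by (simp add: power2_eq_square algebra_simps)
  hence g01: "0 \<le> g" "g \<le> 1"
    using S by (simp_all add: g_def power_divide)
  have "(c + w)\<^sup>2 * (1 - g) = (c + w)\<^sup>2 - (c - w)\<^sup>2"
    using S by (simp add: g_def power_divide right_diff_distrib)
  hence "4 * (c * w) = (c + w)\<^sup>2 * (1 - g)"
    by (simp add: power2_eq_square algebra_simps)
  hence "2 * sqrt (c * w) = (c + w) * sqrt (1 - g)"
    using S by (metis abs_of_pos real_sqrt_abs real_sqrt_four real_sqrt_mult)
  also have "\<dots> \<le> (c + w) * (1 - g / 2)"
    using S g01 by (intro mult_left_mono sqrt_one_minus_le) auto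
  finally show ?thesis by (simp add: g_def algebra_simps)
qed

definition edge :: "(nat \<Rightarrow> nat \<Rightarrow> int list) \<Rightarrow> (nat \<Rightarrow> nat \<Rightarrow> int) \<Rightarrow> nat
    \<Rightarrow> (nat \<Rightarrow> int list \<Rightarrow> real) \<Rightarrow> (int list \<Rightarrow> real) \<Rightarrow> nat \<Rightarrow> real" where
  "edge x y m F h i = (\<Sum>j<m. bw x y F i j / bW x y m F i * real_of_int (y i j) * h (x i j))"

definition total_weight :: "(nat \<Rightarrow> nat \<Rightarrow> int list) \<Rightarrow> (nat \<Rightarrow> nat \<Rightarrow> int) \<Rightarrow> nat \<Rightarrow> nat
    \<Rightarrow> (nat \<Rightarrow> int list \<Rightarrow> real) \<Rightarrow> real" where
  "total_weight x y n m F = (\<Sum>i<n. bW x y m F i)"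

lemma objective_eq_sum_edge: "objective x y n m F h = (\<Sum>i<n. bW x y m F i * (edge x y m F h i)\<^sup>2)"
  by (simp add: objective_def edge_def)

lemma Gamma_eq:
  "Gamma x y n m hs s = objective x y n m (boostF x y m hs s) (hs s) / total_weight x y n m (boostF x y m hs s)"
  by (simp add: Gamma_def total_weight_def)

lemma pm_mult_eq_if:
  fixes u v :: real
  assumes "u \<in> {-1, 1}" "v \<in> {-1, 1}"
  shows "u * v = (if u = v then 1 else -1)"
  using assms by auto

lemma bw_pos: "bw x y F i j > 0"
  by (simp add: bw_def)

lemma correct_mass_nonneg: "correct_mass x y m F h i \<ge> 0"
  unfolding correct_mass_def using bw_pos by (intro sum_nonneg) (simp add: less_imp_le)

lemma wrong_mass_nonneg: "wrong_mass x y m F h i \<ge> 0"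
  unfolding wrong_mass_def using bw_pos by (intro sum_nonneg) (simp add: less_imp_le)

lemma bW_eq_correct_plus_wrong: "bW x y m F i = correct_mass x y m F h i + wrong_mass x y m F h i"
  unfolding bW_def correct_mass_def wrong_mass_def sum.distrib[symmetric]
  by (intro sum.cong) auto

context
  fixes x :: "nat \<Rightarrow> nat \<Rightarrow> int list" and y :: "nat \<Rightarrow> nat \<Rightarrow> int"
    and m i :: nat and h :: "int list \<Rightarrow> real"
  assumes pm: "\<And>j. j < m \<Longrightarrow> real_of_int (y i j) \<in> {-1, 1} \<and> h (x i j) \<in> {-1, 1}"
begin

lemma label_mult_hyp_eq_if: "j < m \<Longrightarrow> real_of_int (y i j) * h (x i j) = (if real_of_int (y i j) = h (x i j) then 1 else -1)"
  using pm by (intro pm_mult_eq_if) auto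

lemma edge_eq_mass_difference:
  "edge x y m F h i = (correct_mass x y m F h i - wrong_mass x y m F h i) / bW x y m F i"
proof -
  have "(\<Sum>j<m. bw x y F i j * real_of_int (y i j) * h (x i j))
      = correct_mass x y m F h i - wrong_mass x y m F h i"
    unfolding correct_mass_def wrong_mass_def sum_subtractf[symmetric] mult.assoc
    by (intro sum.cong) (auto simp: label_mult_hyp_eq_if)
  thus ?thesis
    by (simp add: edge_def sum_divide_distrib[symmetric])
qed

lemma bW_update:
  "bW x y m (\<lambda>i' v. F i' v + a i' * h v) i
     = correct_mass x y m F h i * exp (- a i) + wrong_mass x y m F h i * exp (a i)"
proof -
  have "bw x y (\<lambda>i' v. F i' v + a i' * h v) i j = bw x y F i j * exp (- a i * (real_of_int (y i j) * h (x i j)))"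
    for j by (simp add: bw_def exp_add[symmetric] algebra_simps)
  thus ?thesis
    unfolding bW_def correct_mass_def wrong_mass_def sum_distrib_right sum.distrib[symmetric]
    by (intro sum.cong) (auto simp: label_mult_hyp_eq_if)
qed

lemma bW_mult_edge_sq_le: "bW x y m F i * (edge x y m F h i)\<^sup>2 \<le> bW x y m F i"
proof -
  define C W where "C = correct_mass x y m F h i" and "W = wrong_mass x y m F h i"
  have "C \<ge> 0" "W \<ge> 0"
    by (simp_all add: C_def W_def correct_mass_nonneg wrong_mass_nonneg)
  hence "(C - W)\<^sup>2 \<le> (C + W) * (C + W)"
    by (simp add: power2_eq_square algebra_simps)
  hence "(C + W) * ((C - W) / (C + W))\<^sup>2 \<le> C + W"
    using \<open>C \<ge> 0\<close> \<open>W \<ge> 0\<close> by (cases "C + W = 0") (auto simp: power_divide power2_eq_square divide_le_eq)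
  thus ?thesis
    by (simp add: edge_eq_mass_difference bW_eq_correct_plus_wrong[where h = h] C_def W_def)
qed

lemma bW_update_balpha_le:
  assumes C: "correct_mass x y m F h i > 0" and W: "wrong_mass x y m F h i > 0"
  shows "bW x y m (\<lambda>i' v. F i' v + balpha x y m F h i' * h v) i
           \<le> bW x y m F i - bW x y m F i * (edge x y m F h i)\<^sup>2 / 2"
proof -
  let ?C = "correct_mass x y m F h i" and ?W = "wrong_mass x y m F h i"
  have "bW x y m (\<lambda>i' v. F i' v + balpha x y m F h i' * h v) i
      = ?C * exp (- (ln (?C / ?W) / 2)) + ?W * exp (ln (?C / ?W) / 2)"
    unfolding bW_update by (simp add: balpha_def)
  also have "\<dots> = 2 * sqrt (?C * ?W)"
    by (rule exp_half_ln_ratio_balance[OF C W])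
  also have "\<dots> \<le> (?C + ?W) - (?C + ?W) * ((?C - ?W) / (?C + ?W))\<^sup>2 / 2"
    by (rule two_sqrt_mult_le[OF C W])
  also have "\<dots> = bW x y m F i - bW x y m F i * (edge x y m F h i)\<^sup>2 / 2"
    by (simp add: edge_eq_mass_difference bW_eq_correct_plus_wrong[where h = h])
  finally show ?thesis .
qed

end

lemma total_weight_nonneg: "total_weight x y n m F \<ge> 0"
  unfolding total_weight_def bW_def using bw_pos by (intro sum_nonneg) (simp add: less_imp_le)

lemma total_weight_boostF_0: "total_weight x y n m (boostF x y m hs 0) = real n * real m"
  by (simp add: total_weight_def bW_def bw_def)

lemma errors_le_total_weight:
  assumes "\<And>i j. i < n \<Longrightarrow> j < m \<Longrightarrow> y i j \<in> {-1, 1}"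
  shows "(\<Sum>i<n. \<Sum>j<m. if sgn (F i (x i j)) \<noteq> real_of_int (y i j) then 1 else 0)
           \<le> total_weight x y n m F"
  unfolding total_weight_def bW_def
proof (intro sum_mono)
  fix i j assume "i \<in> {..<n}" "j \<in> {..<m}"
  hence "y i j \<in> {-1, 1}" using assms by auto
  thus "(if sgn (F i (x i j)) \<noteq> real_of_int (y i j) then 1 else 0) \<le> bw x y F i j"
    unfolding bw_def by (cases "F i (x i j)" rule: linorder_cases) (auto simp: sgn_if)
qed

context
  fixes x :: "nat \<Rightarrow> nat \<Rightarrow> int list" and y :: "nat \<Rightarrow> nat \<Rightarrow> int"
    and n m s :: nat and hs :: "nat \<Rightarrow> int list \<Rightarrow> real"
  assumes pm: "\<And>i j. i < n \<Longrightarrow> j < m \<Longrightarrow> real_of_int (y i j) \<in> {-1, 1} \<and> hs s (x i j) \<in> {-1, 1}"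
begin

lemma Gamma_le_1: "Gamma x y n m hs s \<le> 1"
proof -
  have "objective x y n m (boostF x y m hs s) (hs s) \<le> total_weight x y n m (boostF x y m hs s)"
    unfolding objective_eq_sum_edge total_weight_def using pm
    by (intro sum_mono bW_mult_edge_sq_le) auto
  thus ?thesis
    using total_weight_nonneg[of x y n m "boostF x y m hs s"] by (auto simp: Gamma_eq divide_le_eq_1)
qed

lemma total_weight_boostF_Suc_le:
  assumes mass_pos: "\<And>i. i < n \<Longrightarrow>
      correct_mass x y m (boostF x y m hs s) (hs s) i > 0 \<and> wrong_mass x y m (boostF x y m hs s) (hs s) i > 0"
  shows "total_weight x y n m (boostF x y m hs (Suc s))
           \<le> total_weight x y n m (boostF x y m hs s) * (1 - Gamma x y n m hs s / 2)"
proof -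
  let ?T = "total_weight x y n m (boostF x y m hs s)"
    and ?obj = "objective x y n m (boostF x y m hs s) (hs s)"
  have "total_weight x y n m (boostF x y m hs (Suc s)) \<le> ?T - ?obj / 2"
    unfolding total_weight_def objective_eq_sum_edge sum_divide_distrib sum_subtractf[symmetric]
    using pm mass_pos by (intro sum_mono) (simp add: Let_def bW_update_balpha_le)
  moreover have "?obj \<ge> 0"
    unfolding objective_eq_sum_edge bW_def using bw_pos
    by (intro sum_nonneg mult_nonneg_nonneg) (auto intro: less_imp_le)
  ultimately show ?thesis
    using total_weight_nonneg[of x y n m "boostF x y m hs s"]
    by (cases "?T = 0") (auto simp: Gamma_eq algebra_simps)
qed

end

lemma le_prod_of_steps:
  fixes T q :: "nat \<Rightarrow> real"
  assumes "\<And>s. s < t \<Longrightarrow> T (Suc s) \<le> T s * q s" and "\<And>s. s < t \<Longrightarrow> q s \<ge> 0"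
  shows "T t \<le> T 0 * (\<Prod>s<t. q s)"
  using assms
proof (induction t)
  case (Suc t)
  have "T (Suc t) \<le> T t * q t" using Suc.prems by simp
  also have "\<dots> \<le> T 0 * (\<Prod>s<t. q s) * q t"
    using Suc by (intro mult_right_mono) auto
  finally show ?case by (simp add: mult.assoc)
qed simp

theorem mainTheorem3:
  fixes n m d t :: nat
    and x :: "nat \<Rightarrow> nat \<Rightarrow> int list" and y :: "nat \<Rightarrow> nat \<Rightarrow> int"
    and H :: "(int list \<Rightarrow> real) set"
    and hs :: "nat \<Rightarrow> int list \<Rightarrow> real"
  assumes x_cube: "\<And>i j. i < n \<Longrightarrow> j < m \<Longrightarrow> x i j \<in> cube d"
    and y_pm: "\<And>i j. i < n \<Longrightarrow> j < m \<Longrightarrow> y i j \<in> {-1, 1}"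
    and H_pm: "\<And>h v. h \<in> H \<Longrightarrow> v \<in> cube d \<Longrightarrow> h v \<in> {-1, 1}"
    and hs_in: "\<And>s. s < t \<Longrightarrow> hs s \<in> H"
    and hs_max: "\<And>s h. s < t \<Longrightarrow> h \<in> H \<Longrightarrow>
        objective x y n m (boostF x y m hs s) h \<le> objective x y n m (boostF x y m hs s) (hs s)"
    and alpha_def: "\<And>s i. s < t \<Longrightarrow> i < n \<Longrightarrow>
        correct_mass x y m (boostF x y m hs s) (hs s) i > 0 \<and>
        wrong_mass x y m (boostF x y m hs s) (hs s) i > 0"
  shows "(\<Sum>i<n. \<Sum>j<m. if sgn (boostF x y m hs t i (x i j)) \<noteq> real_of_int (y i j) then 1 else 0)
           / (real n * real m)
         \<le> (\<Prod>s<t. 1 - Gamma x y n m hs s / 2)"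
proof -
  have pm: "real_of_int (y i j) \<in> {-1, 1} \<and> hs s (x i j) \<in> {-1, 1}"
    if "s < t" "i < n" "j < m" for s i j
    using that y_pm[of i j] H_pm[OF hs_in x_cube] by auto
  have factor_nonneg: "1 - Gamma x y n m hs s / 2 \<ge> 0" if "s < t" for s
  proof -
    have "Gamma x y n m hs s \<le> 1"
      using pm that by (intro Gamma_le_1) auto
    thus ?thesis by simp
  qed
  have "(\<Sum>i<n. \<Sum>j<m. if sgn (boostF x y m hs t i (x i j)) \<noteq> real_of_int (y i j) then 1 else 0)
      \<le> total_weight x y n m (boostF x y m hs t)"
    using y_pm by (rule errors_le_total_weight)
  also have "\<dots> \<le> total_weight x y n m (boostF x y m hs 0) * (\<Prod>s<t. 1 - Gamma x y n m hs s / 2)"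
  proof (rule le_prod_of_steps)
    fix s assume "s < t"
    thus "total_weight x y n m (boostF x y m hs (Suc s))
        \<le> total_weight x y n m (boostF x y m hs s) * (1 - Gamma x y n m hs s / 2)"
      using pm alpha_def by (intro total_weight_boostF_Suc_le) auto
  qed (rule factor_nonneg)
  finally have "(\<Sum>i<n. \<Sum>j<m. if sgn (boostF x y m hs t i (x i j)) \<noteq> real_of_int (y i j) then 1 else 0)
      \<le> real n * real m * (\<Prod>s<t. 1 - Gamma x y n m hs s / 2)"
    by (simp only: total_weight_boostF_0)
  moreover have "(\<Prod>s<t. 1 - Gamma x y n m hs s / 2) \<ge> 0"
    using factor_nonneg by (intro prod_nonneg) auto
  ultimately show ?thesis
    by (cases "real n * real m = 0") (auto simp: divide_le_eq mult.commute)
qed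

end
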